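(* Let $(V,e)$ be a unital $\ast$-normed space which is a function system, i.e. $\operatorname{ball}V=S^\circ$ where $S=V_{he}^\ast\cap\operatorname{ball}V^\ast$. Let $\mathfrak{c}=\{v\in V_h:\langle v,\varphi\rangle\ge0\ \forall\varphi\in S\}$ and $\|v\|_e=\sup\{|\langle v,\varphi\rangle|:\varphi\in S\}$. Then $\mathfrak{c}$ is a separated, closed, unital cone in $V$ with $S(\mathfrak{c})=S$, and $\|\cdot\|=\|\cdot\|_e$. In particular $\|e\|=1$.
   Context: A $\ast$-normed space is a complex vector space with involution and norm satisfying $\|v^\ast\|=\|v\|$; $V_h$ are the hermitian elements; $V^\ast$ has involution $\langle v,\varphi^\ast\rangle=\overline{\langle v^\ast,\varphi\rangle}$, $V_h^\ast$ its hermitian bounded functionals, and for nonzero $e\in V_h$, $V_{he}^\ast=\{y\in V_h^\ast:\langle e,y\rangle=1\}$. $(V,e)$ is unital if $V_{he}^\ast\cap\operatorname{ball}V^\ast\neq\varnothing$. $S^\circ=\{v\in V:|\langle v,\varphi\rangle|\le1\ \forall\varphi\in S\}$. A cone $\mathfrak{c}\subseteq V_h$ is separated if $\mathfrak{c}\cap-\mathfrak{c}=\{0\}$, unital if for every $v\in V_h$ some $v+re$ ($r\ge0$) lies in $\mathfrak{c}$; $S(\mathfrak{c})$ is the set of linear functionals $\varphi$ on $V$ with $\varphi(\mathfrak{c})\ge0$, $\varphi(e)=1$. *)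

theory Defs
  imports "HOL-Analysis.Analysis"
begin

text \<open>Isabelle's library has no complex normed vector spaces, so a complex normed space is
  represented as a real normed vector space together with J (multiplication by i).\<close>
definition cscale :: "('a::real_vector \<Rightarrow> 'a) \<Rightarrow> complex \<Rightarrow> 'a \<Rightarrow> 'a" where
  "cscale J c v = Re c *\<^sub>R v + Im c *\<^sub>R J v"

definition complex_structure :: "('a::real_normed_vector \<Rightarrow> 'a) \<Rightarrow> bool" where
  "complex_structure J \<longleftrightarrow> linear J \<and> (\<forall>v. J (J v) = - v) \<and>
     (\<forall>c v. norm (cscale J c v) = cmod c * norm v)"

definition star_normed :: "('a::real_normed_vector \<Rightarrow> 'a) \<Rightarrow> ('a \<Rightarrow> 'a) \<Rightarrow> bool" where
  "star_normed J st \<longleftrightarrow> complex_structure J \<and>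
     (\<forall>v. st (st v) = v) \<and>
     (\<forall>c v. st (cscale J c v) = cscale J (cnj c) (st v)) \<and>
     (\<forall>u v. st (u + v) = st u + st v) \<and>
     (\<forall>v. norm (st v) = norm v)"

definition herm :: "('a \<Rightarrow> 'a) \<Rightarrow> 'a set" where
  "herm st = {v. st v = v}"

definition clin_fun :: "('a::real_vector \<Rightarrow> 'a) \<Rightarrow> ('a \<Rightarrow> complex) \<Rightarrow> bool" where
  "clin_fun J \<phi> \<longleftrightarrow> (\<forall>c v. \<phi> (cscale J c v) = c * \<phi> v) \<and> (\<forall>u v. \<phi> (u + v) = \<phi> u + \<phi> v)"

definition dual_ball :: "('a::real_normed_vector \<Rightarrow> 'a) \<Rightarrow> ('a \<Rightarrow> complex) set" where
  "dual_ball J = {\<phi>. clin_fun J \<phi> \<and> bounded_linear \<phi> \<and> onorm \<phi> \<le> 1}"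

text \<open>Hermitian bounded functionals: phi^* = phi, where <v, phi^*> = conj <v^*, phi>.\<close>
definition herm_dual :: "('a::real_normed_vector \<Rightarrow> 'a) \<Rightarrow> ('a \<Rightarrow> 'a) \<Rightarrow> ('a \<Rightarrow> complex) set" where
  "herm_dual J st = {\<phi>. clin_fun J \<phi> \<and> bounded_linear \<phi> \<and> (\<forall>v. cnj (\<phi> (st v)) = \<phi> v)}"

definition herm_dual_e :: "('a::real_normed_vector \<Rightarrow> 'a) \<Rightarrow> ('a \<Rightarrow> 'a) \<Rightarrow> 'a \<Rightarrow> ('a \<Rightarrow> complex) set" where
  "herm_dual_e J st e = {\<phi>\<in>herm_dual J st. \<phi> e = 1}"

definition polar :: "('a \<Rightarrow> complex) set \<Rightarrow> 'a set" where
  "polar S = {v. \<forall>\<phi>\<in>S. cmod (\<phi> v) \<le> 1}"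

definition separated_cone :: "'a::real_vector set \<Rightarrow> bool" where
  "separated_cone c \<longleftrightarrow> c \<inter> uminus ` c = {0}"

definition unital_cone :: "('a::real_vector \<Rightarrow> 'a) \<Rightarrow> 'a \<Rightarrow> 'a set \<Rightarrow> bool" where
  "unital_cone st e c \<longleftrightarrow> (\<forall>v\<in>herm st. \<exists>r::real. r \<ge> 0 \<and> v + r *\<^sub>R e \<in> c)"

definition states :: "('a::real_vector \<Rightarrow> 'a) \<Rightarrow> 'a \<Rightarrow> 'a set \<Rightarrow> ('a \<Rightarrow> complex) set" where
  "states J e c = {\<phi>. clin_fun J \<phi> \<and> (\<forall>v\<in>c. Im (\<phi> v) = 0 \<and> Re (\<phi> v) \<ge> 0) \<and> \<phi> e = 1}"

end

theory Submission
  imports Defs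
begin

text \<open>The cone c is cut out by the continuous functionals in S, so it is a closed convex cone,
  and the polar condition says that S norms V, which gives the formula for the norm and
  separatedness. For hermitian h the element \<open>\<parallel>h\<parallel> e \<plusminus> h\<close> lies in c, so c is unital and every
  state \<phi> of c is real on V_h with \<open>\<bar>\<phi> h\<bar> \<le> \<parallel>h\<parallel>\<close>. Writing v = h + i k with h, k hermitian
  shows that \<phi> is hermitian, and rotating v so that \<phi> v \<ge> 0 and passing to the hermitian
  part of the rotated vector shows \<open>\<parallel>\<phi>\<parallel> \<le> 1\<close>; hence \<phi> \<in> S.\<close>

lemma cscale_of_real [simp]: "cscale J (of_real r) v = r *\<^sub>R v"
  by (simp add: cscale_def)

lemma cscale_ii [simp]: "cscale J \<i> v = J v"
  by (simp add: cscale_def)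

lemma clin_fun_add: "clin_fun J \<phi> \<Longrightarrow> \<phi> (u + v) = \<phi> u + \<phi> v"
  by (simp add: clin_fun_def)

lemma clin_fun_cscale: "clin_fun J \<phi> \<Longrightarrow> \<phi> (cscale J c v) = c * \<phi> v"
  by (simp add: clin_fun_def)

lemma clin_fun_scaleR: "clin_fun J \<phi> \<Longrightarrow> \<phi> (r *\<^sub>R v) = of_real r * \<phi> v"
  by (metis clin_fun_cscale cscale_of_real)

lemma clin_fun_zero: "clin_fun J \<phi> \<Longrightarrow> \<phi> 0 = 0"
  using clin_fun_scaleR[of J \<phi> 0 0] by simp

lemma clin_fun_J: "clin_fun J \<phi> \<Longrightarrow> \<phi> (J v) = \<i> * \<phi> v"
  by (metis clin_fun_cscale cscale_ii)

lemma clin_fun_linear: "clin_fun J \<phi> \<Longrightarrow> linear \<phi>"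
  by (rule linearI) (simp_all add: clin_fun_add clin_fun_scaleR scaleR_conv_of_real)

lemma dual_ball_norm_le:
  assumes "\<phi> \<in> dual_ball J"
  shows "cmod (\<phi> v) \<le> norm v"
proof -
  have "bounded_linear \<phi>" and "onorm \<phi> \<le> 1"
    using assms by (auto simp: dual_ball_def)
  then have "cmod (\<phi> v) \<le> onorm \<phi> * norm v"
    by (intro onorm)
  also have "\<dots> \<le> norm v"
    using \<open>onorm \<phi> \<le> 1\<close> mult_right_mono[of "onorm \<phi>" 1 "norm v"] by simp
  finally show ?thesis .
qed

lemma in_dual_ballI:
  assumes "clin_fun J \<phi>" and "\<And>v. cmod (\<phi> v) \<le> norm v"
  shows "\<phi> \<in> dual_ball J"
proof -
  have "bounded_linear \<phi>"
    by (rule bounded_linear_intro[where K=1])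
       (simp_all add: assms clin_fun_add[OF assms(1)] clin_fun_scaleR[OF assms(1)] scaleR_conv_of_real)
  moreover have "onorm \<phi> \<le> 1"
    by (rule onorm_bound) (simp_all add: assms)
  ultimately show ?thesis
    using assms(1) by (simp add: dual_ball_def)
qed

lemma herm_dual_real_on_herm:
  assumes "\<phi> \<in> herm_dual J st" and "v \<in> herm st"
  shows "Im (\<phi> v) = 0"
proof -
  have "cnj (\<phi> (st v)) = \<phi> v"
    using assms(1) by (simp add: herm_dual_def)
  moreover have "st v = v"
    using assms(2) by (simp add: herm_def)
  ultimately have "cnj (\<phi> v) = \<phi> v"
    by simp
  then show ?thesis
    by (metis Reals_cnj_iff complex_is_Real_iff)
qed

lemma norm_eq_SUP_if_ball_eq_polar:
  assumes "S \<noteq> {}" and "S \<subseteq> dual_ball J" and "{v. norm v \<le> 1} = polar S"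
  shows "norm v = (SUP \<phi>\<in>S. cmod (\<phi> v))"
proof (rule antisym)
  have bound: "cmod (\<phi> v) \<le> norm v" if "\<phi> \<in> S" for \<phi>
    using that assms(2) dual_ball_norm_le by blast
  then have bdd: "bdd_above ((\<lambda>\<phi>. cmod (\<phi> v)) ` S)"
    by (intro bdd_aboveI[of _ "norm v"]) auto
  define s where "s = (SUP \<phi>\<in>S. cmod (\<phi> v))"
  have le_s: "cmod (\<phi> v) \<le> s" if "\<phi> \<in> S" for \<phi>
    unfolding s_def using that bdd by (rule cSUP_upper)
  show "norm v \<le> s"
  proof (rule dense_ge)
    fix t assume "s < t"
    moreover obtain \<phi>\<^sub>0 where "\<phi>\<^sub>0 \<in> S"
      using assms(1) by blast
    then have "0 \<le> s"
      by (rule order_trans[OF norm_ge_zero le_s])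
    ultimately have "0 < t" by simp
    have "(1/t) *\<^sub>R v \<in> polar S"
    proof (unfold polar_def, intro CollectI ballI)
      fix \<phi> assume "\<phi> \<in> S"
      then have "clin_fun J \<phi>"
        using assms(2) by (auto simp: dual_ball_def)
      then have "cmod (\<phi> ((1/t) *\<^sub>R v)) = cmod (\<phi> v) / t"
        using \<open>0 < t\<close> by (simp add: clin_fun_scaleR norm_divide)
      then show "cmod (\<phi> ((1/t) *\<^sub>R v)) \<le> 1"
        using le_s[OF \<open>\<phi> \<in> S\<close>] \<open>s < t\<close> \<open>0 < t\<close> by (simp add: divide_le_eq)
    qed
    then have "(1/t) *\<^sub>R v \<in> {v. norm v \<le> 1}"
      by (simp only: assms(3))
    then have "norm v / t \<le> 1"
      using \<open>0 < t\<close> by simp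
    then show "norm v \<le> t"
      using \<open>0 < t\<close> by (simp add: divide_le_eq)
  qed
  show "s \<le> norm v"
    unfolding s_def using assms(1) bound by (rule cSUP_least)
qed

lemma norm_eq_if_SUP_const:
  fixes S :: "('a::real_normed_vector \<Rightarrow> complex) set"
  assumes "S \<noteq> {}" and "norm v = (SUP \<phi>\<in>S. cmod (\<phi> v))" and "\<And>\<phi>. \<phi> \<in> S \<Longrightarrow> cmod (\<phi> v) = c"
  shows "norm v = c"
proof -
  have "(SUP \<phi>\<in>S. cmod (\<phi> v)) = (SUP \<phi>\<in>S. c)"
    using assms(3) by (rule SUP_cong[OF refl])
  then show ?thesis
    using assms(1,2) by simp
qed

definition positive_cone :: "('a \<Rightarrow> 'a) \<Rightarrow> ('a \<Rightarrow> complex) set \<Rightarrow> 'a set" where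
  "positive_cone st S = {v\<in>herm st. \<forall>\<phi>\<in>S. Im (\<phi> v) = 0 \<and> Re (\<phi> v) \<ge> 0}"

locale star_normed_space =
  fixes J st :: "'a::real_normed_vector \<Rightarrow> 'a"
  assumes star_normed: "star_normed J st"
begin

lemma J_J: "J (J v) = - v"
  using star_normed by (simp add: star_normed_def complex_structure_def)

lemma linear_J: "linear J"
  using star_normed by (simp add: star_normed_def complex_structure_def)

lemma norm_cscale: "norm (cscale J c v) = cmod c * norm v"
  using star_normed by (simp add: star_normed_def complex_structure_def)

lemma st_st: "st (st v) = v"
  using star_normed by (simp add: star_normed_def)

lemma st_cscale: "st (cscale J c v) = cscale J (cnj c) (st v)"
  using star_normed by (simp add: star_normed_def)

lemma norm_st: "norm (st v) = norm v"
  using star_normed by (simp add: star_normed_def)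

lemma st_add: "st (u + v) = st u + st v"
  using star_normed by (simp add: star_normed_def)

lemma st_scaleR: "st (r *\<^sub>R v) = r *\<^sub>R st v"
  by (metis st_cscale cscale_of_real complex_cnj_complex_of_real)

lemma st_J: "st (J v) = - J (st v)"
  using st_cscale[of \<i> v] by (simp add: cscale_def)

lemma linear_st: "linear st"
  by (rule linearI) (simp_all add: st_add st_scaleR)

lemma bounded_linear_st: "bounded_linear st"
  by (rule bounded_linear_intro[where K=1]) (simp_all add: st_add st_scaleR norm_st)

lemma herm_add: "u \<in> herm st \<Longrightarrow> v \<in> herm st \<Longrightarrow> u + v \<in> herm st"
  by (simp add: herm_def st_add)

lemma herm_scaleR: "v \<in> herm st \<Longrightarrow> r *\<^sub>R v \<in> herm st"
  by (simp add: herm_def st_scaleR)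

lemma zero_in_herm: "0 \<in> herm st"
  by (simp add: herm_def linear_0[OF linear_st])

lemma closed_herm: "closed (herm st)"
proof -
  have "continuous_on UNIV st"
    using bounded_linear_st linear_continuous_on by blast
  then have "closed {v. st v = id v}"
    by (intro closed_Collect_eq continuous_on_id) auto
  then show ?thesis by (simp add: herm_def)
qed

lemma real_part_in_herm: "(1/2) *\<^sub>R (v + st v) \<in> herm st"
  by (simp add: herm_def st_add st_scaleR st_st add.commute)

lemma herm_decomposition:
  obtains h k where "h \<in> herm st" "k \<in> herm st" "v = h + J k" "st v = h - J k"
proof
  define h where "h = (1/2) *\<^sub>R (v + st v)"
  define k where "k = (1/2) *\<^sub>R (J (st v) - J v)"
  have half: "(1/2) *\<^sub>R x + (1/2) *\<^sub>R x = x" for x :: 'a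
    by (metis scaleR_add_left field_sum_of_halves scaleR_one)
  have Jk: "J k = (1/2) *\<^sub>R (v - st v)"
    unfolding k_def using J_J by (simp add: linear_diff[OF linear_J] linear_scale[OF linear_J])
  show "h \<in> herm st"
    unfolding h_def by (rule real_part_in_herm)
  show "k \<in> herm st"
    unfolding herm_def k_def
    by (simp add: linear_diff[OF linear_st] st_scaleR st_st st_J linear_neg[OF linear_J])
  show "v = h + J k" "st v = h - J k"
    unfolding Jk h_def by (simp_all add: algebra_simps half)
qed

lemma hermitian_if_real_on_herm:
  assumes "clin_fun J \<phi>" and "\<And>h. h \<in> herm st \<Longrightarrow> Im (\<phi> h) = 0"
  shows "cnj (\<phi> (st v)) = \<phi> v"
proof -
  obtain h k where "h \<in> herm st" "k \<in> herm st" "v = h + J k" "st v = h - J k"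
    by (rule herm_decomposition)
  then have "\<phi> v = \<phi> h + \<i> * \<phi> k" and "\<phi> (st v) = \<phi> h - \<i> * \<phi> k"
    by (simp_all add: linear_add linear_diff clin_fun_linear[OF assms(1)] clin_fun_J[OF assms(1)])
  then show ?thesis
    using assms(2) \<open>h \<in> herm st\<close> \<open>k \<in> herm st\<close> by (simp add: complex_eq_iff)
qed

lemma norm_le_if_norm_le_on_herm:
  assumes "clin_fun J \<phi>" and hermitian: "\<And>v. cnj (\<phi> (st v)) = \<phi> v"
    and bound: "\<And>h. h \<in> herm st \<Longrightarrow> cmod (\<phi> h) \<le> norm h"
  shows "cmod (\<phi> v) \<le> norm v"
proof (cases "\<phi> v = 0")
  case False
  define u where "u = cnj (\<phi> v) / cmod (\<phi> v)"
  define w where "w = cscale J u v"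
  define h where "h = (1/2) *\<^sub>R (w + st w)"
  have "cmod u = 1"
    using False by (simp add: u_def norm_divide)
  have "u * \<phi> v = (cnj (\<phi> v) * \<phi> v) / cmod (\<phi> v)"
    by (simp add: u_def)
  also have "\<dots> = cmod (\<phi> v)"
    using False by (simp add: complex_norm_square[symmetric] mult.commute power2_eq_square)
  finally have "u * \<phi> v = cmod (\<phi> v)" .
  then have "\<phi> w = cmod (\<phi> v)"
    by (simp add: w_def clin_fun_cscale[OF assms(1)])
  moreover have "\<phi> (st w) = cnj (\<phi> w)"
    by (metis hermitian complex_cnj_cnj)
  ultimately have "\<phi> h = cmod (\<phi> v)"
    by (simp add: h_def clin_fun_add[OF assms(1)] clin_fun_scaleR[OF assms(1)])
  have "h \<in> herm st"
    unfolding h_def by (rule real_part_in_herm)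
  have "norm h \<le> norm v"
  proof -
    have "norm h \<le> (1/2) * (norm w + norm (st w))"
      unfolding h_def by (simp add: norm_triangle_ineq)
    also have "\<dots> = norm v"
      using \<open>cmod u = 1\<close> by (simp add: w_def norm_st norm_cscale)
    finally show ?thesis .
  qed
  then show ?thesis
    using bound[OF \<open>h \<in> herm st\<close>] \<open>\<phi> h = cmod (\<phi> v)\<close> by simp
qed simp

lemma convex_cone_positive_cone:
  assumes "\<And>\<phi>. \<phi> \<in> S \<Longrightarrow> clin_fun J \<phi>"
  shows "convex_cone (positive_cone st S)"
  unfolding convex_cone_iff positive_cone_def
  using zero_in_herm herm_add herm_scaleR
  by (auto simp: clin_fun_zero[OF assms] clin_fun_add[OF assms] clin_fun_scaleR[OF assms])

lemma closed_positive_cone: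
  assumes "\<And>\<phi>. \<phi> \<in> S \<Longrightarrow> bounded_linear \<phi>"
  shows "closed (positive_cone st S)"
proof -
  have "closed ({v. Im (\<phi> v) = 0} \<inter> {v. 0 \<le> Re (\<phi> v)})" if "\<phi> \<in> S" for \<phi>
  proof -
    have "continuous_on UNIV \<phi>"
      using assms[OF that] linear_continuous_on by blast
    then show ?thesis
      by (intro closed_Int closed_Collect_eq closed_Collect_le continuous_intros)
  qed
  moreover have "positive_cone st S =
      herm st \<inter> (\<Inter>\<phi>\<in>S. {v. Im (\<phi> v) = 0} \<inter> {v. 0 \<le> Re (\<phi> v)})"
    unfolding positive_cone_def by auto
  ultimately show ?thesis
    using closed_herm by auto
qed

lemma separated_cone_positive_cone:
  assumes "\<And>\<phi>. \<phi> \<in> S \<Longrightarrow> clin_fun J \<phi>" and "\<And>v. \<forall>\<phi>\<in>S. \<phi> v = 0 \<Longrightarrow> v = 0"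
  shows "separated_cone (positive_cone st S)"
proof -
  have "v = 0" if "v \<in> positive_cone st S" "- v \<in> positive_cone st S" for v
  proof (rule assms(2), intro ballI)
    fix \<phi> assume "\<phi> \<in> S"
    then have "\<phi> (- v) = - \<phi> v"
      using assms(1) clin_fun_linear linear_neg by blast
    moreover have "Im (\<phi> v) = 0" "Re (\<phi> v) \<ge> 0" "Re (\<phi> (- v)) \<ge> 0"
      using that \<open>\<phi> \<in> S\<close> by (auto simp: positive_cone_def)
    ultimately show "\<phi> v = 0"
      by (simp add: complex_eq_iff)
  qed
  moreover have "0 \<in> positive_cone st S"
    using convex_cone_positive_cone[OF assms(1)] by (simp add: convex_cone_iff)
  ultimately show ?thesis
    unfolding separated_cone_def by (auto intro: image_eqI[of 0 _ 0])
qed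

lemma order_unit_in_positive_cone:
  assumes "e \<in> herm st" and "S \<subseteq> herm_dual_e J st e \<inter> dual_ball J"
    and "h \<in> herm st" and "\<bar>s\<bar> \<le> 1"
  shows "norm h *\<^sub>R e + s *\<^sub>R h \<in> positive_cone st S"
proof -
  have "Im (\<phi> (norm h *\<^sub>R e + s *\<^sub>R h)) = 0 \<and> Re (\<phi> (norm h *\<^sub>R e + s *\<^sub>R h)) \<ge> 0"
    if "\<phi> \<in> S" for \<phi>
  proof -
    have "\<phi> \<in> herm_dual J st" "\<phi> e = 1" "\<phi> \<in> dual_ball J" "clin_fun J \<phi>"
      using that assms(2) by (auto simp: herm_dual_e_def herm_dual_def)
    then have "\<phi> (norm h *\<^sub>R e + s *\<^sub>R h) = norm h + s * \<phi> h"
      by (simp add: clin_fun_add clin_fun_scaleR)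
    moreover have "Im (\<phi> h) = 0"
      using \<open>\<phi> \<in> herm_dual J st\<close> assms(3) by (rule herm_dual_real_on_herm)
    moreover have "\<bar>s * Re (\<phi> h)\<bar> \<le> norm h"
    proof -
      have "\<bar>s * Re (\<phi> h)\<bar> \<le> \<bar>Re (\<phi> h)\<bar>"
        using assms(4) by (simp add: abs_mult mult_left_le_one_le)
      also have "\<dots> \<le> cmod (\<phi> h)"
        by (rule abs_Re_le_cmod)
      also have "\<dots> \<le> norm h"
        using \<open>\<phi> \<in> dual_ball J\<close> by (rule dual_ball_norm_le)
      finally show ?thesis .
    qed
    ultimately show ?thesis by auto
  qed
  moreover have "norm h *\<^sub>R e + s *\<^sub>R h \<in> herm st"
    using assms(1,3) herm_add herm_scaleR by blast
  ultimately show ?thesis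
    unfolding positive_cone_def by blast
qed

lemma unital_cone_positive_cone:
  assumes "e \<in> herm st" and "S \<subseteq> herm_dual_e J st e \<inter> dual_ball J"
  shows "unital_cone st e (positive_cone st S)"
proof (unfold unital_cone_def, intro ballI)
  fix v assume "v \<in> herm st"
  then have "norm v *\<^sub>R e + 1 *\<^sub>R v \<in> positive_cone st S"
    by (rule order_unit_in_positive_cone[OF assms]) simp
  then show "\<exists>r::real. r \<ge> 0 \<and> v + r *\<^sub>R e \<in> positive_cone st S"
    by (intro exI[of _ "norm v"]) (simp add: add.commute)
qed

lemma state_real_bounded_on_herm:
  assumes "e \<in> herm st" and "S \<subseteq> herm_dual_e J st e \<inter> dual_ball J"
    and "\<phi> \<in> states J e (positive_cone st S)" and "h \<in> herm st"
  shows "Im (\<phi> h) = 0 \<and> \<bar>Re (\<phi> h)\<bar> \<le> norm h"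
proof -
  have clin: "clin_fun J \<phi>" and "\<phi> e = 1"
    and positive: "\<And>v. v \<in> positive_cone st S \<Longrightarrow> Im (\<phi> v) = 0 \<and> Re (\<phi> v) \<ge> 0"
    using assms(3) by (auto simp: states_def)
  have "Im (norm h + s * \<phi> h) = 0 \<and> Re (norm h + s * \<phi> h) \<ge> 0" if "\<bar>s\<bar> \<le> 1" for s :: real
  proof -
    have "norm h *\<^sub>R e + s *\<^sub>R h \<in> positive_cone st S"
      using assms(1,2,4) that by (rule order_unit_in_positive_cone)
    moreover have "\<phi> (norm h *\<^sub>R e + s *\<^sub>R h) = norm h + s * \<phi> h"
      using clin \<open>\<phi> e = 1\<close> by (simp add: clin_fun_add clin_fun_scaleR)
    ultimately show ?thesis
      using positive by fastforce
  qed
  from this[of 1] this[of "-1"] show ?thesis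
    by auto
qed

lemma states_positive_cone:
  assumes "e \<in> herm st"
  shows "states J e (positive_cone st (herm_dual_e J st e \<inter> dual_ball J))
           = herm_dual_e J st e \<inter> dual_ball J"
    (is "states J e ?c = ?S")
proof
  show "?S \<subseteq> states J e ?c"
    by (auto simp: states_def positive_cone_def herm_dual_e_def herm_dual_def)
next
  show "states J e ?c \<subseteq> ?S"
  proof
    fix \<phi> assume "\<phi> \<in> states J e ?c"
    then have clin: "clin_fun J \<phi>" and "\<phi> e = 1"
      by (auto simp: states_def)
    have real_bounded: "Im (\<phi> h) = 0 \<and> \<bar>Re (\<phi> h)\<bar> \<le> norm h" if "h \<in> herm st" for h
      using assms subset_refl \<open>\<phi> \<in> states J e ?c\<close> that by (rule state_real_bounded_on_herm)
    have hermitian: "cnj (\<phi> (st v)) = \<phi> v" for v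
      using hermitian_if_real_on_herm[OF clin] real_bounded by blast
    have herm_bound: "cmod (\<phi> h) \<le> norm h" if "h \<in> herm st" for h
      using real_bounded[OF that] by (simp add: cmod_eq_Re)
    have "cmod (\<phi> v) \<le> norm v" for v
      using clin hermitian herm_bound by (rule norm_le_if_norm_le_on_herm)
    then have "\<phi> \<in> dual_ball J"
      by (rule in_dual_ballI[OF clin])
    then show "\<phi> \<in> ?S"
      using clin hermitian \<open>\<phi> e = 1\<close> by (simp add: herm_dual_e_def herm_dual_def dual_ball_def)
  qed
qed

end

theorem lemma4p1:
  fixes J st :: "'a::real_normed_vector \<Rightarrow> 'a" and e :: 'a
  assumes "star_normed J st"
    and "e \<in> herm st" and "e \<noteq> 0"
    and "herm_dual_e J st e \<inter> dual_ball J \<noteq> {}"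
    and "{v. norm v \<le> 1} = polar (herm_dual_e J st e \<inter> dual_ball J)"
  shows "let S = herm_dual_e J st e \<inter> dual_ball J;
             c = {v\<in>herm st. \<forall>\<phi>\<in>S. Im (\<phi> v) = 0 \<and> Re (\<phi> v) \<ge> 0}
         in convex_cone c \<and> separated_cone c \<and> closed c \<and> unital_cone st e c
            \<and> states J e c = S
            \<and> (\<forall>v. norm v = (SUP \<phi>\<in>S. cmod (\<phi> v)))
            \<and> norm e = 1"
proof -
  interpret star_normed_space J st
    using assms(1) by unfold_locales
  define S where "S = herm_dual_e J st e \<inter> dual_ball J"
  have "S \<noteq> {}"
    using assms(4) by (simp add: S_def)
  have clin: "clin_fun J \<phi>" and bounded: "bounded_linear \<phi>" and unit: "\<phi> e = 1" if "\<phi> \<in> S" for \<phi>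
    using that by (auto simp: S_def herm_dual_e_def herm_dual_def)
  have norm_SUP: "norm v = (SUP \<phi>\<in>S. cmod (\<phi> v))" for v
    using \<open>S \<noteq> {}\<close> assms(5) by (intro norm_eq_SUP_if_ball_eq_polar) (auto simp: S_def)
  have "v = 0" if "\<forall>\<phi>\<in>S. \<phi> v = 0" for v
    using norm_eq_if_SUP_const[OF \<open>S \<noteq> {}\<close> norm_SUP, of v 0] that by simp
  then have "separated_cone (positive_cone st S)"
    using separated_cone_positive_cone[OF clin] by blast
  moreover have "norm e = 1"
    by (rule norm_eq_if_SUP_const[OF \<open>S \<noteq> {}\<close> norm_SUP]) (simp add: unit)
  moreover have "unital_cone st e (positive_cone st S)"
    using assms(2) by (rule unital_cone_positive_cone) (simp add: S_def)
  ultimately show ?thesis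
    unfolding Let_def positive_cone_def[symmetric] S_def[symmetric]
    using convex_cone_positive_cone[OF clin] closed_positive_cone[OF bounded]
      states_positive_cone[OF assms(2), folded S_def] norm_SUP
    by blast
qed

end
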